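(* Let $A$ be an MV-algebra and $d$ an isotone $(\odot,\vee)$-derivation on $A$ with $d(1)\in\mathbf{B}(A)$. Then $d\circ d=d$.
   Context: An MV-algebra is an algebra $(A,\oplus,{}^*,0)$ of type $(2,1,0)$ satisfying: $x\oplus(y\oplus z)=(x\oplus y)\oplus z$, $x\oplus y=y\oplus x$, $x\oplus 0=x$, $x^{**}=x$, $x\oplus 0^*=0^*$, $(x^*\oplus y)^*\oplus y=(y^*\oplus x)^*\oplus x$. Put $1=0^*$ and $x\odot y=(x^*\oplus y^* )^*$. The natural order is $x\le y$ iff $x^*\oplus y=1$, with lattice operations $x\vee y=(x\odot y^* )\oplus y$, $x\wedge y=x\odot(x^*\oplus y)$. The Boolean center is $\mathbf{B}(A)=\{x\in A: x\oplus x=x\}$. A $(\odot,\vee)$-derivation on $A$ is a map $d:A\to A$ with $d(x\odot y)=(d(x)\odot y)\vee(x\odot d(y))$ for all $x,y\in A$; it is isotone if $x\le y$ implies $d(x)\le d(y)$. *)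

theory Defs
  imports Main
begin

definition mv_algebra :: "('a \<Rightarrow> 'a \<Rightarrow> 'a) \<Rightarrow> ('a \<Rightarrow> 'a) \<Rightarrow> 'a \<Rightarrow> bool" where
  "mv_algebra opl ng z \<longleftrightarrow>
     (\<forall>x y w. opl x (opl y w) = opl (opl x y) w) \<and>
     (\<forall>x y. opl x y = opl y x) \<and>
     (\<forall>x. opl x z = x) \<and>
     (\<forall>x. ng (ng x) = x) \<and>
     (\<forall>x. opl x (ng z) = ng z) \<and>
     (\<forall>x y. opl (ng (opl (ng x) y)) y = opl (ng (opl (ng y) x)) x)"

definition mv_one :: "('a \<Rightarrow> 'a) \<Rightarrow> 'a \<Rightarrow> 'a" where
  "mv_one ng z = ng z"

definition mv_odot :: "('a \<Rightarrow> 'a \<Rightarrow> 'a) \<Rightarrow> ('a \<Rightarrow> 'a) \<Rightarrow> 'a \<Rightarrow> 'a \<Rightarrow> 'a" where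
  "mv_odot opl ng x y = ng (opl (ng x) (ng y))"

definition mv_le :: "('a \<Rightarrow> 'a \<Rightarrow> 'a) \<Rightarrow> ('a \<Rightarrow> 'a) \<Rightarrow> 'a \<Rightarrow> 'a \<Rightarrow> 'a \<Rightarrow> bool" where
  "mv_le opl ng z x y \<longleftrightarrow> opl (ng x) y = mv_one ng z"

definition mv_join :: "('a \<Rightarrow> 'a \<Rightarrow> 'a) \<Rightarrow> ('a \<Rightarrow> 'a) \<Rightarrow> 'a \<Rightarrow> 'a \<Rightarrow> 'a" where
  "mv_join opl ng x y = opl (mv_odot opl ng x (ng y)) y"

definition mv_boolean_center :: "('a \<Rightarrow> 'a \<Rightarrow> 'a) \<Rightarrow> 'a set" where
  "mv_boolean_center opl = {x. opl x x = x}"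

definition odot_join_derivation ::
  "('a \<Rightarrow> 'a \<Rightarrow> 'a) \<Rightarrow> ('a \<Rightarrow> 'a) \<Rightarrow> ('a \<Rightarrow> 'a) \<Rightarrow> bool" where
  "odot_join_derivation opl ng d \<longleftrightarrow>
     (\<forall>x y. d (mv_odot opl ng x y) =
        mv_join opl ng (mv_odot opl ng (d x) y) (mv_odot opl ng x (d y)))"

definition mv_isotone :: "('a \<Rightarrow> 'a \<Rightarrow> 'a) \<Rightarrow> ('a \<Rightarrow> 'a) \<Rightarrow> 'a \<Rightarrow> ('a \<Rightarrow> 'a) \<Rightarrow> bool" where
  "mv_isotone opl ng z d \<longleftrightarrow> (\<forall>x y. mv_le opl ng z x y \<longrightarrow> mv_le opl ng z (d x) (d y))"

end

theory Submission
  imports Defs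
begin

text \<open>Write \<open>b = d 1\<close>. From \<open>d (x \<odot> x\<^sup>*) = d 0 = 0\<close> one gets \<open>d x \<le> x\<close>, and from
  \<open>d (x \<odot> 1) = (d x \<odot> 1) \<or> (x \<odot> b)\<close> one gets \<open>x \<odot> b \<le> d x\<close>. Isotonicity gives \<open>d x \<le> b\<close>,
  and below the Boolean element \<open>b\<close> multiplication by \<open>b\<close> is the identity. Hence
  \<open>d x = d x \<odot> b \<le> d (d x) \<le> d x\<close>.\<close>

locale mv =
  fixes opl :: "'a \<Rightarrow> 'a \<Rightarrow> 'a" (infixl \<open>\<oplus>\<close> 65) and ng :: "'a \<Rightarrow> 'a" and z :: 'a
  assumes mv_algebra: "mv_algebra opl ng z"
begin

notation ng (\<open>_\<^sup>\<star>\<close> [1000] 1000)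

abbreviation one :: 'a where "one \<equiv> mv_one ng z"
abbreviation odot (infixl \<open>\<odot>\<close> 70) where "x \<odot> y \<equiv> mv_odot opl ng x y"
abbreviation join (infixl \<open>\<squnion>\<close> 65) where "x \<squnion> y \<equiv> mv_join opl ng x y"
abbreviation le (infix \<open>\<preceq>\<close> 50) where "x \<preceq> y \<equiv> mv_le opl ng z x y"

lemma add_assoc: "x \<oplus> (y \<oplus> w) = x \<oplus> y \<oplus> w"
  and add_commute: "x \<oplus> y = y \<oplus> x"
  and add_zero: "x \<oplus> z = x"
  and neg_neg [simp]: "x\<^sup>\<star>\<^sup>\<star> = x"
  and add_one: "x \<oplus> one = one"
  and neg_add_swap: "(x\<^sup>\<star> \<oplus> y)\<^sup>\<star> \<oplus> y = (y\<^sup>\<star> \<oplus> x)\<^sup>\<star> \<oplus> x"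
  using mv_algebra unfolding mv_algebra_def mv_one_def by blast+

lemma zero_add: "z \<oplus> x = x"
  by (metis add_commute add_zero)

lemma neg_add_self: "x\<^sup>\<star> \<oplus> x = one"
  using neg_add_swap[of one x] by (metis add_commute add_one mv_one_def neg_neg zero_add)

lemma neg_add_absorb: "x\<^sup>\<star> \<oplus> (x \<oplus> y) = one"
  by (metis add_assoc add_commute add_one neg_add_self)

lemma add_eq_zeroD: "x \<oplus> y = z \<Longrightarrow> y = z"
  by (metis add_commute add_zero neg_add_absorb mv_one_def neg_neg)

lemma le_iff: "x \<preceq> y \<longleftrightarrow> x\<^sup>\<star> \<oplus> y = one"
  unfolding mv_le_def ..

lemma le_one: "x \<preceq> one"
  by (simp add: le_iff add_one)

lemma le_trans: "x \<preceq> y \<Longrightarrow> y \<preceq> w \<Longrightarrow> x \<preceq> w"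
  unfolding le_iff mv_one_def by (metis add_assoc add_zero add_one mv_one_def neg_neg neg_add_swap)

lemma le_antisym: "x \<preceq> y \<Longrightarrow> y \<preceq> x \<Longrightarrow> x = y"
  unfolding le_iff using neg_add_swap[of x y] by (metis mv_one_def neg_neg zero_add)

lemma odot_zero: "x \<odot> z = z"
  by (metis add_one mv_odot_def mv_one_def neg_neg)

lemma zero_odot: "z \<odot> x = z"
  by (metis add_commute add_one mv_odot_def mv_one_def neg_neg)

lemma odot_one: "x \<odot> one = x"
  by (simp add: mv_odot_def mv_one_def add_zero)

lemma odot_eq_zero_iff_le: "x \<odot> y\<^sup>\<star> = z \<longleftrightarrow> x \<preceq> y"
  by (metis le_iff mv_odot_def mv_one_def neg_neg)

lemma join_commute: "x \<squnion> y = y \<squnion> x"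
  unfolding mv_join_def mv_odot_def using neg_add_swap[of x y] by simp

lemma join_zero: "z \<squnion> z = z"
  by (metis mv_join_def add_zero odot_one mv_one_def)

lemma join_eq_zeroD: "x \<squnion> y = z \<Longrightarrow> x = z"
  by (metis join_commute mv_join_def add_eq_zeroD)

lemma le_join_right: "y \<preceq> x \<squnion> y"
  unfolding le_iff mv_join_def by (metis add_commute neg_add_absorb)

lemma le_odot_boolean: "y \<preceq> b \<Longrightarrow> b \<oplus> b = b \<Longrightarrow> y \<preceq> y \<odot> b"
  unfolding le_iff mv_odot_def by (metis add_assoc add_commute add_one neg_add_swap)

end

locale isotone_derivation = mv +
  fixes d :: "'a \<Rightarrow> 'a"
  assumes derivation: "odot_join_derivation opl ng d"
    and isotone: "mv_isotone opl ng z d"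
begin

lemma derivation_odot: "d (x \<odot> y) = (d x \<odot> y) \<squnion> (x \<odot> d y)"
  using derivation unfolding odot_join_derivation_def by blast

lemma derivation_mono: "x \<preceq> y \<Longrightarrow> d x \<preceq> d y"
  using isotone unfolding mv_isotone_def by blast

lemma derivation_zero: "d z = z"
  using derivation_odot[of z z] by (simp add: odot_zero zero_odot join_zero)

lemma derivation_le: "d x \<preceq> x"
proof -
  have "(d x \<odot> x\<^sup>\<star>) \<squnion> (x \<odot> d (x\<^sup>\<star>)) = z"
    using derivation_odot[of x "x\<^sup>\<star>"] odot_eq_zero_iff_le[of x x]
    by (metis derivation_zero le_iff neg_add_self)
  then show ?thesis
    using join_eq_zeroD odot_eq_zero_iff_le by blast
qed

lemma odot_derivation_one_le: "x \<odot> d one \<preceq> d x"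
  by (metis derivation_odot le_join_right odot_one)

lemma derivation_idempotent:
  assumes "d one \<oplus> d one = d one"
  shows "d (d x) = d x"
proof (rule le_antisym)
  show "d (d x) \<preceq> d x"
    by (rule derivation_le)
  have "d x \<preceq> d x \<odot> d one"
    using le_odot_boolean[OF derivation_mono[OF le_one] assms] .
  then show "d x \<preceq> d (d x)"
    using le_trans odot_derivation_one_le by blast
qed

end

theorem corollary3p23:
  fixes opl :: "'a \<Rightarrow> 'a \<Rightarrow> 'a" and ng :: "'a \<Rightarrow> 'a" and z :: 'a and d :: "'a \<Rightarrow> 'a"
  assumes "mv_algebra opl ng z"
    and "odot_join_derivation opl ng d"
    and "mv_isotone opl ng z d"
    and "d (mv_one ng z) \<in> mv_boolean_center opl"
  shows "d \<circ> d = d"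
proof -
  interpret isotone_derivation opl ng z d
    using assms(1-3) by (simp add: isotone_derivation_def isotone_derivation_axioms_def mv_def)
  show ?thesis
    using assms(4) derivation_idempotent by (auto simp: mv_boolean_center_def)
qed

end
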